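(* Let $A_1$ and $A_2$ be two Jordan-Lie algebras, either both classical or both quantum (see context), and suppose $A_1$ has a Casimir element $C$, i.e. $[C,a]=0$ for all $a\in A_1$. Suppose there is a linear map $\phi: A_1\to A_1\otimes A_2$ which is a Jordan-Lie algebra homomorphism: $$[\phi(a),\phi(b)]=\phi([a,b]),\qquad \phi(a\circ b)=\phi(a)\circ\phi(b)\qquad \forall a,b\in A_1 .$$ Fix an integer $N\ge 2$ and define recursively $\phi^{(2)}=\phi$ and $$\phi^{(i)}=(\phi^{(2)}\otimes \underbrace{id\otimes\cdots\otimes id}_{i-2})\circ\phi^{(i-1)},\qquad i=3,\dots,N,$$ so that $\phi^{(i)}:A_1\to A_1\otimes \underbrace{A_2\otimes\cdots\otimes A_2}_{i-1}$. For $i=2,\dots,N$ set $$C^{(i)}=\phi^{(i)}(C)\otimes\underbrace{1\otimes\cdots\otimes 1}_{N-i}\in A_1\otimes\underbrace{A_2\otimes\cdots\otimes A_2}_{N-1}.$$ Then the elements $C^{(2)},\dots,C^{(N)}$ pairwise commute in $A_1\otimes A_2^{\otimes(N-1)}$, i.e. $[C^{(i)},C^{(j)}]=0$ for all $2\le i,j\le N$. Moreover, $[\phi^{(N)}(a),C^{(i)}]=0$ for all $a\in A_1$ and all $i=2,\dots,N$.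
   Context: A generalized Jordan-Lie algebra is a vector space $\mathcal A$ (with unit $1$) equipped with two bilinear operations $\circ$ and $[\cdot,\cdot]$ with values in $\mathcal A$ such that for all $a,b,c$: $(a\circ b)\circ c=a\circ(b\circ c)$; $[a,b]=-[b,a]$; $[a,[b,c]]+[c,[a,b]]+[b,[c,a]]=0$; and $[a,b\circ c]=b\circ[a,c]+[a,b]\circ c$. A classical Jordan-Lie algebra (CJL) is one in which $\circ$ is commutative (e.g. a Poisson algebra of functions with pointwise product and Poisson bracket); a quantum Jordan-Lie algebra (QJL) is one in which $[a,b]=a\circ b-b\circ a$. For two such algebras $A,B$ (both CJL or both QJL), $A\otimes B$ is again such an algebra with $(a\otimes b)\circ(a'\otimes b')=(a\circ a')\otimes(b\circ b')$ and $[a\otimes b,a'\otimes b']=[a,a']\otimes (b\circ b')+(a'\circ a)\otimes[b,b']$; iterated tensor products are given this structure. Products/brackets of elements are written without subscripts indicating the space. *)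

theory Defs
  imports Complex_Main "HOL-Library.Poly_Mapping"
begin

definition bilin :: "('a::real_vector \<Rightarrow> 'a \<Rightarrow> 'a) \<Rightarrow> bool" where
  "bilin f \<longleftrightarrow> (\<forall>x. linear (f x)) \<and> (\<forall>y. linear (\<lambda>x. f x y))"

definition gen_JL :: "('a::real_vector \<Rightarrow> 'a \<Rightarrow> 'a) \<Rightarrow> ('a \<Rightarrow> 'a \<Rightarrow> 'a) \<Rightarrow> 'a \<Rightarrow> bool" where
  "gen_JL circ br e \<longleftrightarrow>
     bilin circ \<and> bilin br \<and>
     (\<forall>a. circ e a = a \<and> circ a e = a) \<and>
     (\<forall>a b c. circ (circ a b) c = circ a (circ b c)) \<and>
     (\<forall>a b. br a b = - br b a) \<and>
     (\<forall>a b c. br a (br b c) + br c (br a b) + br b (br c a) = 0) \<and>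
     (\<forall>a b c. br a (circ b c) = circ b (br a c) + circ (br a b) c)"

definition CJL :: "('a::real_vector \<Rightarrow> 'a \<Rightarrow> 'a) \<Rightarrow> ('a \<Rightarrow> 'a \<Rightarrow> 'a) \<Rightarrow> 'a \<Rightarrow> bool" where
  "CJL circ br e \<longleftrightarrow> gen_JL circ br e \<and> (\<forall>a b. circ a b = circ b a)"

definition QJL :: "('a::real_vector \<Rightarrow> 'a \<Rightarrow> 'a) \<Rightarrow> ('a \<Rightarrow> 'a \<Rightarrow> 'a) \<Rightarrow> 'a \<Rightarrow> bool" where
  "QJL circ br e \<longleftrightarrow> gen_JL circ br e \<and> (\<forall>a b. br a b = circ a b - circ b a)"

instantiation poly_mapping :: (type, real_vector) real_vector
begin
lift_definition scaleR_poly_mapping :: "real \<Rightarrow> ('a \<Rightarrow>\<^sub>0 'b) \<Rightarrow> ('a \<Rightarrow>\<^sub>0 'b)"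
  is "\<lambda>r f k. r *\<^sub>R f k"
  by (erule finite_subset[rotated]) auto
instance
  by standard (transfer; auto simp: scaleR_add_right scaleR_add_left)+
end

text \<open>A formal linear combination of symbols (a, [b1,...,bk]) stands for
  a \<otimes> b1 \<otimes> ... \<otimes> bk.  The quotient is the direct sum over k of
  A \<otimes> B^(\<otimes>k).\<close>

type_synonym ('a,'b) formal = "('a \<times> 'b list) \<Rightarrow>\<^sub>0 real"

definition sym1 :: "'a \<Rightarrow> 'b list \<Rightarrow> ('a,'b) formal" where
  "sym1 a bs = Poly_Mapping.single (a, bs) 1"

inductive_set nullsp :: "('a::real_vector, 'b::real_vector) formal set" where
  zero: "0 \<in> nullsp"
| add: "f \<in> nullsp \<Longrightarrow> g \<in> nullsp \<Longrightarrow> f + g \<in> nullsp"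
| scale: "f \<in> nullsp \<Longrightarrow> r *\<^sub>R f \<in> nullsp"
| addA: "sym1 (a + a') bs - sym1 a bs - sym1 a' bs \<in> nullsp"
| scaleA: "sym1 (r *\<^sub>R a) bs - r *\<^sub>R sym1 a bs \<in> nullsp"
| addB: "i < length bs \<Longrightarrow>
     sym1 a (bs[i := b + b']) - sym1 a (bs[i := b]) - sym1 a (bs[i := b']) \<in> nullsp"
| scaleB: "i < length bs \<Longrightarrow>
     sym1 a (bs[i := r *\<^sub>R b]) - r *\<^sub>R sym1 a (bs[i := b]) \<in> nullsp"

definition tens_rel :: "('a::real_vector, 'b::real_vector) formal \<Rightarrow> ('a, 'b) formal \<Rightarrow> bool" where
  "tens_rel f g \<longleftrightarrow> f - g \<in> nullsp"

lemma nullsp_uminus: "f \<in> nullsp \<Longrightarrow> - f \<in> nullsp"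
  using nullsp.scale[of f "-1"] by (metis scaleR_minus1_left)

lemma equivp_tens_rel: "equivp tens_rel"
proof (rule equivpI)
  show "reflp tens_rel" by (rule reflpI) (simp add: tens_rel_def nullsp.zero)
  show "symp tens_rel" unfolding tens_rel_def
  proof (rule sympI)
    fix f g
    assume "f - g \<in> nullsp"
    then have "- (f - g) \<in> nullsp" by (rule nullsp_uminus)
    then show "g - f \<in> nullsp" by simp
  qed
  show "transp tens_rel" unfolding tens_rel_def
  proof (rule transpI)
    fix f g h
    assume "f - g \<in> nullsp" "g - h \<in> nullsp"
    then have "(f - g) + (g - h) \<in> nullsp" by (rule nullsp.add)
    then show "f - h \<in> nullsp" by simp
  qed
qed

quotient_type (overloaded) ('a, 'b) tensor = "('a::real_vector, 'b::real_vector) formal" / tens_rel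
  by (rule equivp_tens_rel)

instantiation tensor :: (real_vector, real_vector) real_vector
begin
lift_definition zero_tensor :: "('a,'b) tensor" is "0" .
lift_definition plus_tensor :: "('a,'b) tensor \<Rightarrow> ('a,'b) tensor \<Rightarrow> ('a,'b) tensor" is "(+)"
proof -
  fix f f' g g' :: "('a,'b) formal"
  assume "tens_rel f f'" "tens_rel g g'"
  then have "(f - f') + (g - g') \<in> nullsp" unfolding tens_rel_def by (rule nullsp.add)
  moreover have "(f - f') + (g - g') = (f + g) - (f' + g')" by (simp add: algebra_simps)
  ultimately show "tens_rel (f + g) (f' + g')" unfolding tens_rel_def by metis
qed
lift_definition uminus_tensor :: "('a,'b) tensor \<Rightarrow> ('a,'b) tensor" is "uminus"
proof -
  fix f f' :: "('a,'b) formal"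
  assume "tens_rel f f'"
  then have "- (f - f') \<in> nullsp" unfolding tens_rel_def by (rule nullsp_uminus)
  moreover have "- (f - f') = (- f) - (- f')" by (simp add: algebra_simps)
  ultimately show "tens_rel (- f) (- f')" unfolding tens_rel_def by metis
qed
lift_definition minus_tensor :: "('a,'b) tensor \<Rightarrow> ('a,'b) tensor \<Rightarrow> ('a,'b) tensor" is "(-)"
proof -
  fix f f' g g' :: "('a,'b) formal"
  assume "tens_rel f f'" "tens_rel g g'"
  then have "(f - f') + - (g - g') \<in> nullsp" unfolding tens_rel_def
    by (intro nullsp.add nullsp_uminus)
  moreover have "(f - f') + - (g - g') = (f - g) - (f' - g')" by (simp add: algebra_simps)
  ultimately show "tens_rel (f - g) (f' - g')" unfolding tens_rel_def by metis
qed
lift_definition scaleR_tensor :: "real \<Rightarrow> ('a,'b) tensor \<Rightarrow> ('a,'b) tensor" is "scaleR"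
proof -
  fix r and f f' :: "('a,'b) formal"
  assume "tens_rel f f'"
  then have "r *\<^sub>R (f - f') \<in> nullsp" unfolding tens_rel_def by (rule nullsp.scale)
  then show "tens_rel (r *\<^sub>R f) (r *\<^sub>R f')" unfolding tens_rel_def
    by (simp add: scaleR_diff_right)
qed

lemma tens_rel_refl: "tens_rel f f"
  by (simp add: tens_rel_def nullsp.zero)

instance
proof
  fix a b c :: "('a,'b) tensor" and r s :: real
  show "a + b + c = a + (b + c)" by transfer (simp add: add.assoc tens_rel_refl)
  show "a + b = b + a" by transfer (simp add: add.commute tens_rel_refl)
  show "0 + a = a" by transfer (simp add: tens_rel_refl)
  show "- a + a = 0" by transfer (simp add: tens_rel_refl)
  show "a - b = a + - b" by transfer (simp add: tens_rel_refl)
  show "r *\<^sub>R (a + b) = r *\<^sub>R a + r *\<^sub>R b" by transfer (simp add: scaleR_add_right tens_rel_refl)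
  show "(r + s) *\<^sub>R a = r *\<^sub>R a + s *\<^sub>R a" by transfer (simp add: scaleR_add_left tens_rel_refl)
  show "r *\<^sub>R s *\<^sub>R a = (r * s) *\<^sub>R a" by transfer (simp add: tens_rel_refl)
  show "1 *\<^sub>R a = a" by transfer (simp add: tens_rel_refl)
qed
end

definition pure :: "'a::real_vector \<Rightarrow> 'b::real_vector list \<Rightarrow> ('a,'b) tensor" where
  "pure a bs = abs_tensor (sym1 a bs)"

definition tgrade :: "nat \<Rightarrow> ('a::real_vector, 'b::real_vector) tensor set" where
  "tgrade k = {abs_tensor f | f. \<forall>x \<in> Poly_Mapping.keys f. length (snd x) = k}"

text \<open>Linear extension of a map given on pure tensors (well defined when the map is
  multilinear, which is the case for all uses below).\<close>
definition tensor_ext :: "('a::real_vector \<Rightarrow> 'b::real_vector list \<Rightarrow> 'c::real_vector)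
    \<Rightarrow> ('a,'b) tensor \<Rightarrow> 'c" where
  "tensor_ext g t = (\<Sum>x \<in> Poly_Mapping.keys (rep_tensor t). Poly_Mapping.lookup (rep_tensor t) x *\<^sub>R g (fst x) (snd x))"

definition tensor_ext2 :: "('a::real_vector \<Rightarrow> 'b::real_vector list \<Rightarrow> 'a \<Rightarrow> 'b list \<Rightarrow> 'c::real_vector)
    \<Rightarrow> ('a,'b) tensor \<Rightarrow> ('a,'b) tensor \<Rightarrow> 'c" where
  "tensor_ext2 h s t = tensor_ext (\<lambda>a bs. tensor_ext (\<lambda>a' bs'. h a bs a' bs') t) s"

definition tensor_right :: "('a::real_vector,'b::real_vector) tensor \<Rightarrow> 'b list \<Rightarrow> ('a,'b) tensor" where
  "tensor_right t bs = tensor_ext (\<lambda>a cs. pure a (cs @ bs)) t"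

definition tcirc :: "('a::real_vector \<Rightarrow> 'a \<Rightarrow> 'a) \<Rightarrow> ('b::real_vector \<Rightarrow> 'b \<Rightarrow> 'b)
    \<Rightarrow> ('a,'b) tensor \<Rightarrow> ('a,'b) tensor \<Rightarrow> ('a,'b) tensor" where
  "tcirc circ1 circ2 = tensor_ext2 (\<lambda>a bs a' bs'.
      if length bs = length bs' then pure (circ1 a a') (map2 circ2 bs bs') else 0)"

text \<open>Bracket on pure tensors, iterated as (A \<otimes> B \<otimes> ... \<otimes> B) \<otimes> B:
  [X \<otimes> b, X' \<otimes> b'] = [X,X'] \<otimes> (b \<circ> b') + (X' \<circ> X) \<otimes> [b,b'].
  The lists are given in reversed order (last tensor factor first).\<close>
fun pbr_rev :: "('a::real_vector \<Rightarrow> 'a \<Rightarrow> 'a) \<Rightarrow> ('a \<Rightarrow> 'a \<Rightarrow> 'a)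
    \<Rightarrow> ('b::real_vector \<Rightarrow> 'b \<Rightarrow> 'b) \<Rightarrow> ('b \<Rightarrow> 'b \<Rightarrow> 'b)
    \<Rightarrow> 'a \<Rightarrow> 'b list \<Rightarrow> 'a \<Rightarrow> 'b list \<Rightarrow> ('a,'b) tensor" where
  "pbr_rev circ1 br1 circ2 br2 a [] a' [] = pure (br1 a a') []"
| "pbr_rev circ1 br1 circ2 br2 a (b # rs) a' (b' # rs') =
     (if length rs = length rs' then
        tensor_right (pbr_rev circ1 br1 circ2 br2 a rs a' rs') [circ2 b b']
        + pure (circ1 a' a) (rev (map2 circ2 rs' rs) @ [br2 b b'])
      else 0)"
| "pbr_rev circ1 br1 circ2 br2 a _ a' _ = 0"

definition tbr :: "('a::real_vector \<Rightarrow> 'a \<Rightarrow> 'a) \<Rightarrow> ('a \<Rightarrow> 'a \<Rightarrow> 'a)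
    \<Rightarrow> ('b::real_vector \<Rightarrow> 'b \<Rightarrow> 'b) \<Rightarrow> ('b \<Rightarrow> 'b \<Rightarrow> 'b)
    \<Rightarrow> ('a,'b) tensor \<Rightarrow> ('a,'b) tensor \<Rightarrow> ('a,'b) tensor" where
  "tbr circ1 br1 circ2 br2 = tensor_ext2 (\<lambda>a bs a' bs'.
      pbr_rev circ1 br1 circ2 br2 a (rev bs) a' (rev bs'))"

definition phi_id :: "('a::real_vector \<Rightarrow> ('a, 'b::real_vector) tensor) \<Rightarrow> ('a,'b) tensor \<Rightarrow> ('a,'b) tensor" where
  "phi_id \<phi> = tensor_ext (\<lambda>a bs. tensor_right (\<phi> a) bs)"

primrec phi_aux :: "('a::real_vector \<Rightarrow> ('a, 'b::real_vector) tensor) \<Rightarrow> nat \<Rightarrow> 'a \<Rightarrow> ('a,'b) tensor" where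
  "phi_aux \<phi> 0 = \<phi>"
| "phi_aux \<phi> (Suc k) = phi_id \<phi> \<circ> phi_aux \<phi> k"

definition phi_sup :: "('a::real_vector \<Rightarrow> ('a, 'b::real_vector) tensor) \<Rightarrow> nat \<Rightarrow> 'a \<Rightarrow> ('a,'b) tensor" where
  "phi_sup \<phi> i = phi_aux \<phi> (i - 2)"

definition Cas :: "('a::real_vector \<Rightarrow> ('a, 'b::real_vector) tensor) \<Rightarrow> 'b \<Rightarrow> 'a \<Rightarrow> nat \<Rightarrow> nat \<Rightarrow> ('a,'b) tensor" where
  "Cas \<phi> e2 C N i = tensor_right (phi_sup \<phi> i C) (replicate (N - i) e2)"

end

theory Submission
  imports Defs
begin

text \<open>Coassociativity gives
  \<phi>^(j+m) = (\<phi>^(j) \<otimes> id \<otimes> \<dots> \<otimes> id) \<circ> \<phi>^(m+1), so \<phi>^(j+m)(a) is a sum of terms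
  \<phi>^(j)(x) \<otimes> b1 \<otimes> \<dots> \<otimes> bm. Since the unit 1 of A2 is a unit for \<circ> and central for the
  bracket, the bracket of such a term with \<phi>^(j)(C) \<otimes> 1 \<otimes> \<dots> \<otimes> 1 is
  [\<phi>^(j)(x), \<phi>^(j)(C)] \<otimes> b1 \<otimes> \<dots> \<otimes> bm. As \<phi> \<otimes> id \<otimes> \<dots> \<otimes> id, and hence every \<phi>^(j),
  is a bracket homomorphism, this is \<phi>^(j)([x, C]) \<otimes> b1 \<otimes> \<dots> \<otimes> bm = 0. Taking for the
  first factor \<phi>^(N)(a), or C^(k) = \<phi>^(k)(C) \<otimes> 1 \<otimes> \<dots> \<otimes> 1 with k \<ge> j, gives both claims.\<close>

section \<open>Linear extension from pure tensors\<close>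

definition formal_ext :: "('a::real_vector \<Rightarrow> 'b::real_vector list \<Rightarrow> 'c::real_vector)
    \<Rightarrow> ('a,'b) formal \<Rightarrow> 'c" where
  "formal_ext g f =
     (\<Sum>x\<in>Poly_Mapping.keys f. Poly_Mapping.lookup f x *\<^sub>R g (fst x) (snd x))"

definition multilinear :: "('a::real_vector \<Rightarrow> 'b::real_vector list \<Rightarrow> 'c::real_vector) \<Rightarrow> bool" where
  "multilinear g \<longleftrightarrow> (\<forall>bs. linear (\<lambda>a. g a bs)) \<and>
     (\<forall>a bs i. i < length bs \<longrightarrow> linear (\<lambda>b. g a (bs[i := b])))"

lemma linear_compose_lambda: "linear f \<Longrightarrow> linear g \<Longrightarrow> linear (\<lambda>x. g (f x))"
  using linear_compose[of f g] by (simp add: o_def)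

lemma formal_ext_superset:
  assumes "finite S" "Poly_Mapping.keys f \<subseteq> S"
  shows "formal_ext g f = (\<Sum>x\<in>S. Poly_Mapping.lookup f x *\<^sub>R g (fst x) (snd x))"
  unfolding formal_ext_def
  by (rule sum.mono_neutral_left) (use assms in \<open>auto simp: in_keys_iff\<close>)

lemma linear_formal_ext: "linear (formal_ext g)"
proof (rule linearI)
  fix f f' :: "('a,'b) formal"
  let ?S = "Poly_Mapping.keys f \<union> Poly_Mapping.keys f'"
  have "Poly_Mapping.keys (f + f') \<subseteq> ?S" by (rule keys_add)
  then show "formal_ext g (f + f') = formal_ext g f + formal_ext g f'"
    using formal_ext_superset[of ?S "f + f'" g] formal_ext_superset[of ?S f g]
      formal_ext_superset[of ?S f' g]
    by (simp add: lookup_add scaleR_add_left sum.distrib)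
next
  fix r and f :: "('a,'b) formal"
  have "Poly_Mapping.keys (r *\<^sub>R f) \<subseteq> Poly_Mapping.keys f"
    by (auto simp: in_keys_iff scaleR_poly_mapping.rep_eq)
  then show "formal_ext g (r *\<^sub>R f) = r *\<^sub>R formal_ext g f"
    using formal_ext_superset[of "Poly_Mapping.keys f" "r *\<^sub>R f" g]
    by (simp add: formal_ext_def scaleR_poly_mapping.rep_eq scaleR_sum_right)
qed

lemma formal_ext_sym1: "formal_ext g (sym1 a bs) = g a bs"
  by (simp add: formal_ext_def sym1_def)

lemma formal_ext_nullsp:
  assumes g: "multilinear g" and "f \<in> nullsp"
  shows "formal_ext g f = 0"
  using \<open>f \<in> nullsp\<close>
proof induction
  case zero
  show ?case by (rule linear_0[OF linear_formal_ext])
next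
  case (add f f')
  then show ?case by (simp add: linear_add[OF linear_formal_ext])
next
  case (scale f r)
  then show ?case by (simp add: linear_cmul[OF linear_formal_ext])
next
  case (addA a a' bs)
  have "linear (\<lambda>a. g a bs)" using g by (simp add: multilinear_def)
  from linear_add[OF this, of a a'] show ?case
    by (simp add: linear_diff[OF linear_formal_ext] formal_ext_sym1)
next
  case (scaleA r a bs)
  have "linear (\<lambda>a. g a bs)" using g by (simp add: multilinear_def)
  from linear_cmul[OF this, of r a] show ?case
    by (simp add: linear_diff[OF linear_formal_ext] linear_cmul[OF linear_formal_ext] formal_ext_sym1)
next
  case (addB i bs a b b')
  have "linear (\<lambda>b. g a (bs[i := b]))" using g addB by (simp add: multilinear_def)
  from linear_add[OF this, of b b'] show ?case
    by (simp add: linear_diff[OF linear_formal_ext] formal_ext_sym1)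
next
  case (scaleB i bs a r b)
  have "linear (\<lambda>b. g a (bs[i := b]))" using g scaleB by (simp add: multilinear_def)
  from linear_cmul[OF this, of r b] show ?case
    by (simp add: linear_diff[OF linear_formal_ext] linear_cmul[OF linear_formal_ext] formal_ext_sym1)
qed

lemma tensor_ext_eq_formal_ext: "tensor_ext g t = formal_ext g (rep_tensor t)"
  by (simp add: tensor_ext_def formal_ext_def)

lemma tensor_ext_abs_tensor:
  assumes "multilinear g"
  shows "tensor_ext g (abs_tensor f) = formal_ext g f"
proof -
  have "tens_rel (rep_tensor (abs_tensor f)) f"
    by (rule Quotient3_rep_abs[OF Quotient3_tensor tens_rel_refl])
  then have "formal_ext g (rep_tensor (abs_tensor f) - f) = 0"
    unfolding tens_rel_def by (rule formal_ext_nullsp[OF assms])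
  then show ?thesis
    by (simp add: tensor_ext_eq_formal_ext linear_diff[OF linear_formal_ext])
qed

lemma abs_rep_tensor: "abs_tensor (rep_tensor t) = t"
  by (rule Quotient3_abs_rep[OF Quotient3_tensor])

lemma linear_abs_tensor: "linear abs_tensor"
  by (rule linearI) (simp_all add: plus_tensor.abs_eq scaleR_tensor.abs_eq)

lemma linear_tensor_ext:
  assumes g: "multilinear g"
  shows "linear (tensor_ext g)"
proof (rule linearI)
  fix s t :: "('a,'b) tensor"
  have "s + t = abs_tensor (rep_tensor s + rep_tensor t)"
    by (metis abs_rep_tensor plus_tensor.abs_eq)
  then have "tensor_ext g (s + t) = formal_ext g (rep_tensor s + rep_tensor t)"
    by (metis tensor_ext_abs_tensor[OF g])
  then show "tensor_ext g (s + t) = tensor_ext g s + tensor_ext g t"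
    by (simp add: linear_add[OF linear_formal_ext] tensor_ext_eq_formal_ext)
next
  fix r and t :: "('a,'b) tensor"
  have "r *\<^sub>R t = abs_tensor (r *\<^sub>R rep_tensor t)"
    by (metis abs_rep_tensor scaleR_tensor.abs_eq)
  then have "tensor_ext g (r *\<^sub>R t) = formal_ext g (r *\<^sub>R rep_tensor t)"
    by (metis tensor_ext_abs_tensor[OF g])
  then show "tensor_ext g (r *\<^sub>R t) = r *\<^sub>R tensor_ext g t"
    by (simp add: linear_cmul[OF linear_formal_ext] tensor_ext_eq_formal_ext)
qed

lemma tensor_ext_pure: "multilinear g \<Longrightarrow> tensor_ext g (pure a bs) = g a bs"
  by (simp add: pure_def tensor_ext_abs_tensor formal_ext_sym1)

lemma formal_eq_sum_sym1:
  "f = (\<Sum>x\<in>Poly_Mapping.keys f. Poly_Mapping.lookup f x *\<^sub>R sym1 (fst x) (snd x))"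
proof (rule poly_mapping_eqI)
  fix k
  have "Poly_Mapping.lookup
          (\<Sum>x\<in>Poly_Mapping.keys f. Poly_Mapping.lookup f x *\<^sub>R sym1 (fst x) (snd x)) k
      = (\<Sum>x\<in>Poly_Mapping.keys f. Poly_Mapping.lookup f x * (1 when x = k))"
    by (simp add: lookup_sum scaleR_poly_mapping.rep_eq sym1_def lookup_single)
  also have "\<dots> = (\<Sum>x\<in>Poly_Mapping.keys f. if k = x then Poly_Mapping.lookup f x else 0)"
    by (rule sum.cong) (auto simp: when_def)
  also have "\<dots> = Poly_Mapping.lookup f k"
    by (simp add: sum.delta in_keys_iff)
  finally show "Poly_Mapping.lookup f k = Poly_Mapping.lookup
      (\<Sum>x\<in>Poly_Mapping.keys f. Poly_Mapping.lookup f x *\<^sub>R sym1 (fst x) (snd x)) k"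
    by simp
qed

lemma abs_tensor_eq_formal_ext_pure: "abs_tensor f = formal_ext pure f"
  by (subst formal_eq_sum_sym1)
     (simp add: linear_sum[OF linear_abs_tensor] linear_cmul[OF linear_abs_tensor]
       formal_ext_def pure_def)

lemma linear_eq_tensor_ext_pure:
  assumes F: "linear F"
  shows "F t = tensor_ext (\<lambda>a bs. F (pure a bs)) t"
proof -
  have "F t = F (formal_ext pure (rep_tensor t))"
    by (metis abs_tensor_eq_formal_ext_pure abs_rep_tensor)
  then show ?thesis
    by (simp add: formal_ext_def tensor_ext_eq_formal_ext linear_sum[OF F] linear_cmul[OF F])
qed

lemma linear_eq_on_pure:
  assumes "linear F" "linear G" "\<And>a bs. F (pure a bs) = G (pure a bs)"
  shows "F t = G t"
  using linear_eq_tensor_ext_pure[OF assms(1), of t] linear_eq_tensor_ext_pure[OF assms(2), of t]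
    assms(3) by simp

lemma bilinear_eq_on_pure:
  assumes "\<And>t. linear (\<lambda>s. F s t)" "\<And>s. linear (\<lambda>t. F s t)"
    and "\<And>t. linear (\<lambda>s. G s t)" "\<And>s. linear (\<lambda>t. G s t)"
    and "\<And>a bs a' bs'. F (pure a bs) (pure a' bs') = G (pure a bs) (pure a' bs')"
  shows "F s t = G s t"
proof -
  have "F (pure a bs) t = G (pure a bs) t" for a bs
    by (rule linear_eq_on_pure[OF assms(2,4,5)])
  then show ?thesis by (rule linear_eq_on_pure[OF assms(1,3)])
qed

lemma linear_tensor_ext_param:
  assumes "\<And>a bs. linear (\<lambda>y. G y a bs)"
  shows "linear (\<lambda>y. tensor_ext (G y) t)"
  unfolding tensor_ext_eq_formal_ext formal_ext_def
  by (rule linear_compose_sum) (auto intro!: module_hom_scale assms)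

lemma multilinear_tensor_ext_param:
  assumes "\<And>a' bs'. multilinear (\<lambda>a bs. G a bs a' bs')"
  shows "multilinear (\<lambda>a bs. tensor_ext (G a bs) t)"
  using assms unfolding multilinear_def by (auto intro!: linear_tensor_ext_param)

lemma multilinear_pure: "multilinear pure"
  unfolding multilinear_def
proof (intro conjI allI impI)
  fix bs :: "'b list"
  show "linear (\<lambda>a::'a. pure a bs)"
  proof (rule linearI)
    fix a a' :: 'a
    have "tens_rel (sym1 (a + a') bs) (sym1 a bs + sym1 a' bs)"
      using nullsp.addA[of a a' bs] by (simp add: tens_rel_def algebra_simps)
    then show "pure (a + a') bs = pure a bs + pure a' bs"
      by (simp add: pure_def plus_tensor.abs_eq tensor.abs_eq_iff)
  next
    fix r and a :: 'a
    have "tens_rel (sym1 (r *\<^sub>R a) bs) (r *\<^sub>R sym1 a bs)"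
      using nullsp.scaleA[of r a bs] by (simp add: tens_rel_def)
    then show "pure (r *\<^sub>R a) bs = r *\<^sub>R pure a bs"
      by (simp add: pure_def scaleR_tensor.abs_eq tensor.abs_eq_iff)
  qed
next
  fix a :: 'a and bs :: "'b list" and i
  assume i: "i < length bs"
  show "linear (\<lambda>b. pure a (bs[i := b]))"
  proof (rule linearI)
    fix b b' :: 'b
    have "tens_rel (sym1 a (bs[i := b + b'])) (sym1 a (bs[i := b]) + sym1 a (bs[i := b']))"
      using nullsp.addB[OF i, of a b b'] by (simp add: tens_rel_def algebra_simps)
    then show "pure a (bs[i := b + b']) = pure a (bs[i := b]) + pure a (bs[i := b'])"
      by (simp add: pure_def plus_tensor.abs_eq tensor.abs_eq_iff)
  next
    fix r and b :: 'b
    have "tens_rel (sym1 a (bs[i := r *\<^sub>R b])) (r *\<^sub>R sym1 a (bs[i := b]))"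
      using nullsp.scaleB[OF i, of a r b] by (simp add: tens_rel_def)
    then show "pure a (bs[i := r *\<^sub>R b]) = r *\<^sub>R pure a (bs[i := b])"
      by (simp add: pure_def scaleR_tensor.abs_eq tensor.abs_eq_iff)
  qed
qed

lemma linear_pure: "linear (\<lambda>a. pure a bs)"
  using multilinear_pure unfolding multilinear_def by blast

lemma linear_pure_slot: "i < length bs \<Longrightarrow> linear (\<lambda>b. pure a (bs[i := b]))"
  using multilinear_pure unfolding multilinear_def by blast

lemma linear_pure_update:
  "k < length L \<Longrightarrow> linear F \<Longrightarrow> linear (\<lambda>b. pure a (L[k := F b]))"
  by (rule linear_compose_lambda[OF _ linear_pure_slot])

lemma linear_pure_last: "linear F \<Longrightarrow> linear (\<lambda>b. pure a (bs @ [F b]))"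
  using linear_pure_update[of "length bs" "bs @ [0]" F a] by simp

lemma multilinear_linear_pure: "linear Q \<Longrightarrow> multilinear (\<lambda>a bs. Q (pure a bs))"
  unfolding multilinear_def
  by (auto intro: linear_compose_lambda[OF linear_pure] linear_compose_lambda[OF linear_pure_slot])

lemma multilinear_append_pure: "multilinear (\<lambda>a cs. pure a (cs @ bs))"
  unfolding multilinear_def
  by (auto simp: linear_pure list_update_append1[symmetric] intro!: linear_pure_slot)

lemma linear_tensor_right: "linear (\<lambda>t. tensor_right t bs)"
  unfolding tensor_right_def by (rule linear_tensor_ext[OF multilinear_append_pure])

lemma tensor_right_pure: "tensor_right (pure a cs) bs = pure a (cs @ bs)"
  unfolding tensor_right_def by (rule tensor_ext_pure[OF multilinear_append_pure])

lemma tensor_right_0 [simp]: "tensor_right 0 bs = 0"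
  by (rule linear_0[OF linear_tensor_right])

lemma tensor_right_Nil [simp]: "tensor_right t [] = t"
  by (rule linear_eq_on_pure[OF linear_tensor_right linear_ident[unfolded id_def]])
     (simp add: tensor_right_pure)

lemma tensor_right_append: "tensor_right (tensor_right t cs) ds = tensor_right t (cs @ ds)"
  by (rule linear_eq_on_pure[OF linear_compose_lambda[OF linear_tensor_right linear_tensor_right]
        linear_tensor_right])
     (simp add: tensor_right_pure)

lemma linear_tensor_right_slot:
  assumes "i < length bs"
  shows "linear (\<lambda>b. tensor_right t (bs[i := b]))"
  unfolding tensor_right_def
proof (rule linear_tensor_ext_param)
  fix a cs
  have "cs @ bs[i := b] = (cs @ bs)[length cs + i := b]" for b
    by (simp add: list_update_append)
  then show "linear (\<lambda>b. pure a (cs @ bs[i := b]))"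
    using linear_pure_slot[of "length cs + i" "cs @ bs" a] assms by simp
qed

lemma linear_tensor_right_single: "linear F \<Longrightarrow> linear (\<lambda>b. tensor_right t [F b])"
  using linear_compose_lambda[OF _ linear_tensor_right_slot[of 0 "[0]" t], of F] by simp

lemma tensor_right_single_0 [simp]: "tensor_right t [0] = 0"
  using linear_0[OF linear_tensor_right_slot[of 0 "[0]" t]] by simp

lemma subspace_tgrade: "subspace (tgrade k)"
proof (rule subspaceI)
  show "0 \<in> tgrade k"
    unfolding tgrade_def by (auto simp: zero_tensor.abs_eq intro!: exI[of _ 0])
next
  fix x y :: "('a,'b) tensor"
  assume "x \<in> tgrade k" "y \<in> tgrade k"
  then obtain f g where f: "x = abs_tensor f" "\<forall>z\<in>Poly_Mapping.keys f. length (snd z) = k"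
    and g: "y = abs_tensor g" "\<forall>z\<in>Poly_Mapping.keys g. length (snd z) = k"
    unfolding tgrade_def by blast
  have "x + y = abs_tensor (f + g)" using f g by (simp add: plus_tensor.abs_eq)
  moreover have "\<forall>z\<in>Poly_Mapping.keys (f + g). length (snd z) = k"
    using f g keys_add[of f g] by blast
  ultimately show "x + y \<in> tgrade k" unfolding tgrade_def by blast
next
  fix c and x :: "('a,'b) tensor"
  assume "x \<in> tgrade k"
  then obtain f where f: "x = abs_tensor f" "\<forall>z\<in>Poly_Mapping.keys f. length (snd z) = k"
    unfolding tgrade_def by blast
  have "c *\<^sub>R x = abs_tensor (c *\<^sub>R f)" using f by (simp add: scaleR_tensor.abs_eq)
  moreover have "Poly_Mapping.keys (c *\<^sub>R f) \<subseteq> Poly_Mapping.keys f"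
    by (auto simp: in_keys_iff scaleR_poly_mapping.rep_eq)
  ultimately show "c *\<^sub>R x \<in> tgrade k" using f unfolding tgrade_def by blast
qed

lemma pure_in_tgrade: "pure a bs \<in> tgrade (length bs)"
  unfolding tgrade_def pure_def sym1_def by auto

lemma tensor_ext_tgrade_in_subspace:
  assumes "T \<in> tgrade k" "multilinear g" "subspace S"
    and "\<And>a bs. length bs = k \<Longrightarrow> g a bs \<in> S"
  shows "tensor_ext g T \<in> S"
proof -
  obtain f where f: "T = abs_tensor f" "\<forall>z\<in>Poly_Mapping.keys f. length (snd z) = k"
    using assms(1) unfolding tgrade_def by blast
  have "formal_ext g f \<in> S"
    unfolding formal_ext_def
    by (rule subspace_sum[OF assms(3)])
       (use f assms(4) in \<open>auto intro!: subspace_scale[OF assms(3)]\<close>)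
  then show ?thesis using f tensor_ext_abs_tensor[OF assms(2)] by simp
qed

lemma tensor_ext_tgrade_eq_0:
  assumes "T \<in> tgrade k" "multilinear g" "\<And>a bs. length bs = k \<Longrightarrow> g a bs = 0"
  shows "tensor_ext g T = 0"
proof -
  obtain f where f: "T = abs_tensor f" "\<forall>z\<in>Poly_Mapping.keys f. length (snd z) = k"
    using assms(1) unfolding tgrade_def by blast
  have "formal_ext g f = 0"
    unfolding formal_ext_def by (rule sum.neutral) (use f assms(3) in auto)
  then show ?thesis using f tensor_ext_abs_tensor[OF assms(2)] by simp
qed

lemma linear_tgrade_eq_0:
  assumes "T \<in> tgrade k" "linear Q" "\<And>a bs. length bs = k \<Longrightarrow> Q (pure a bs) = 0"
  shows "Q T = 0"
proof -
  have "Q T = tensor_ext (\<lambda>a bs. Q (pure a bs)) T"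
    by (rule linear_eq_tensor_ext_pure[OF assms(2)])
  also have "\<dots> = 0"
    by (rule tensor_ext_tgrade_eq_0[OF assms(1) multilinear_linear_pure[OF assms(2)] assms(3)])
  finally show ?thesis .
qed

lemma tensor_right_in_tgrade: "T \<in> tgrade k \<Longrightarrow> tensor_right T bs \<in> tgrade (k + length bs)"
  unfolding tensor_right_def
  by (rule tensor_ext_tgrade_in_subspace[OF _ multilinear_append_pure subspace_tgrade])
     (auto, metis length_append pure_in_tgrade)

lemma multilinear_tensor_right_image: "linear F \<Longrightarrow> multilinear (\<lambda>a bs. tensor_right (F a) bs)"
  unfolding multilinear_def
  by (auto intro: linear_compose_lambda[OF _ linear_tensor_right] linear_tensor_right_slot)

lemma linear_phi_id: "linear F \<Longrightarrow> linear (phi_id F)"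
  unfolding phi_id_def by (rule linear_tensor_ext[OF multilinear_tensor_right_image])

lemma phi_id_pure: "linear F \<Longrightarrow> phi_id F (pure a bs) = tensor_right (F a) bs"
  unfolding phi_id_def by (rule tensor_ext_pure[OF multilinear_tensor_right_image])

lemma phi_id_tensor_right:
  "linear F \<Longrightarrow> phi_id F (tensor_right t bs) = tensor_right (phi_id F t) bs"
  by (rule linear_eq_on_pure[OF linear_compose_lambda[OF linear_tensor_right linear_phi_id]
        linear_compose_lambda[OF linear_phi_id linear_tensor_right]])
     (simp_all add: tensor_right_pure phi_id_pure tensor_right_append)

lemma phi_id_compose:
  assumes F: "linear F" and G: "linear G"
  shows "phi_id (phi_id G \<circ> F) t = phi_id G (phi_id F t)"
proof -
  have GF: "linear (phi_id G \<circ> F)" by (rule linear_compose[OF F linear_phi_id[OF G]])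
  show ?thesis
    by (rule linear_eq_on_pure[OF linear_phi_id[OF GF]
          linear_compose_lambda[OF linear_phi_id[OF F] linear_phi_id[OF G]]])
       (simp add: phi_id_pure[OF GF] phi_id_pure[OF F] phi_id_tensor_right[OF G])
qed

lemma phi_id_in_tgrade:
  "linear F \<Longrightarrow> (\<And>a. F a \<in> tgrade 1) \<Longrightarrow> T \<in> tgrade k \<Longrightarrow> phi_id F T \<in> tgrade (Suc k)"
  unfolding phi_id_def
  by (rule tensor_ext_tgrade_in_subspace[OF _ multilinear_tensor_right_image subspace_tgrade])
     (auto, metis One_nat_def plus_1_eq_Suc tensor_right_in_tgrade)

lemma linear_phi_aux: "linear \<phi> \<Longrightarrow> linear (phi_aux \<phi> k)"
  by (induction k) (auto intro: linear_compose linear_phi_id)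

lemma phi_aux_in_tgrade:
  "linear \<phi> \<Longrightarrow> (\<And>a. \<phi> a \<in> tgrade 1) \<Longrightarrow> phi_aux \<phi> k a \<in> tgrade (Suc k)"
  by (induction k) (auto intro: phi_id_in_tgrade)

text \<open>Coassociativity: \<phi>^(j+k+3) = (\<phi>^(j+2) \<otimes> id \<otimes> \<dots> \<otimes> id) \<circ> \<phi>^(k+2).\<close>
lemma phi_aux_add:
  assumes "linear \<phi>"
  shows "phi_aux \<phi> (j + k + 1) = phi_id (phi_aux \<phi> j) \<circ> phi_aux \<phi> k"
proof (induction j)
  case 0
  show ?case by simp
next
  case (Suc j)
  have "phi_aux \<phi> (Suc j + k + 1) = phi_id \<phi> \<circ> phi_aux \<phi> (j + k + 1)"
    by simp
  also have "\<dots> = phi_id \<phi> \<circ> (phi_id (phi_aux \<phi> j) \<circ> phi_aux \<phi> k)"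
    by (simp only: Suc.IH)
  also have "\<dots> = phi_id (phi_aux \<phi> (Suc j)) \<circ> phi_aux \<phi> k"
    using phi_id_compose[OF linear_phi_aux[OF assms] assms] by (auto simp: fun_eq_iff)
  finally show ?case .
qed

section \<open>Product and bracket on iterated tensor products\<close>

lemma map2_update_right:
  "length xs = length ys \<Longrightarrow> i < length ys \<Longrightarrow>
   map2 f xs (ys[i := y]) = (map2 f xs ys)[i := f (xs ! i) y]"
  using zip_update[of xs i "xs ! i" ys y] by (simp add: map_update)

lemma map2_update_left:
  "length xs = length ys \<Longrightarrow> i < length xs \<Longrightarrow>
   map2 f (xs[i := x]) ys = (map2 f xs ys)[i := f x (ys ! i)]"
  using zip_update[of xs i x ys "ys ! i"] by (simp add: map_update)

lemma rev_map2_rev: "length xs = length ys \<Longrightarrow> rev (map2 f (rev xs) (rev ys)) = map2 f xs ys"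
  by (simp add: zip_rev rev_map)

locale bilinear_ops =
  fixes circ1 br1 :: "'a::real_vector \<Rightarrow> 'a \<Rightarrow> 'a"
    and circ2 br2 :: "'b::real_vector \<Rightarrow> 'b \<Rightarrow> 'b"
  assumes bilin_circ1: "bilin circ1" and bilin_br1: "bilin br1"
    and bilin_circ2: "bilin circ2" and bilin_br2: "bilin br2"
begin

lemma linear_circ1: "linear (circ1 x)" and linear_circ1_left: "linear (\<lambda>y. circ1 y x)"
  and linear_br1: "linear (br1 x)" and linear_br1_left: "linear (\<lambda>y. br1 y x)"
  and linear_circ2: "linear (circ2 u)" and linear_circ2_left: "linear (\<lambda>v. circ2 v u)"
  and linear_br2: "linear (br2 u)" and linear_br2_left: "linear (\<lambda>v. br2 v u)"
  using bilin_circ1 bilin_br1 bilin_circ2 bilin_br2 by (auto simp: bilin_def)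

abbreviation tens_circ where "tens_circ \<equiv> tcirc circ1 circ2"
abbreviation tens_br where "tens_br \<equiv> tbr circ1 br1 circ2 br2"
abbreviation pbr where "pbr \<equiv> pbr_rev circ1 br1 circ2 br2"

definition pure_circ :: "'a \<Rightarrow> 'b list \<Rightarrow> 'a \<Rightarrow> 'b list \<Rightarrow> ('a,'b) tensor" where
  "pure_circ a bs a' bs' =
     (if length bs = length bs' then pure (circ1 a a') (map2 circ2 bs bs') else 0)"

lemma multilinear_pure_circ_right: "multilinear (\<lambda>a' bs'. pure_circ a bs a' bs')"
  unfolding multilinear_def
proof (intro conjI allI impI)
  fix bs'
  show "linear (\<lambda>a'. pure_circ a bs a' bs')"
    by (cases "length bs = length bs'")
       (simp_all add: pure_circ_def linear_zero linear_compose_lambda[OF linear_circ1 linear_pure])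
next
  fix a' :: 'a and bs' :: "'b list" and i
  assume i: "i < length bs'"
  show "linear (\<lambda>b. pure_circ a bs a' (bs'[i := b]))"
  proof (cases "length bs = length bs'")
    case True
    then show ?thesis
      using i linear_compose_lambda[OF linear_circ2
          linear_pure_slot[of i "map2 circ2 bs bs'" "circ1 a a'"]]
      by (simp add: pure_circ_def map2_update_right)
  qed (simp add: pure_circ_def linear_zero)
qed

lemma multilinear_pure_circ_left: "multilinear (\<lambda>a bs. pure_circ a bs a' bs')"
  unfolding multilinear_def
proof (intro conjI allI impI)
  fix bs
  show "linear (\<lambda>a. pure_circ a bs a' bs')"
    by (cases "length bs = length bs'")
       (simp_all add: pure_circ_def linear_zero linear_compose_lambda[OF linear_circ1_left linear_pure])
next
  fix a :: 'a and bs :: "'b list" and i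
  assume i: "i < length bs"
  show "linear (\<lambda>b. pure_circ a (bs[i := b]) a' bs')"
  proof (cases "length bs = length bs'")
    case True
    then show ?thesis
      using i linear_compose_lambda[OF linear_circ2_left
          linear_pure_slot[of i "map2 circ2 bs bs'" "circ1 a a'"]]
      by (simp add: pure_circ_def map2_update_left)
  qed (simp add: pure_circ_def linear_zero)
qed

lemma tens_circ_eq: "tens_circ s t = tensor_ext (\<lambda>a bs. tensor_ext (pure_circ a bs) t) s"
  by (simp add: tcirc_def tensor_ext2_def pure_circ_def[abs_def])

lemma linear_tens_circ_left: "linear (\<lambda>s. tens_circ s t)"
  unfolding tens_circ_eq
  by (rule linear_tensor_ext[OF multilinear_tensor_ext_param[OF multilinear_pure_circ_left]])

lemma linear_tens_circ_right: "linear (\<lambda>t. tens_circ s t)"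
  unfolding tens_circ_eq
  by (rule linear_tensor_ext_param) (rule linear_tensor_ext[OF multilinear_pure_circ_right])

lemma tens_circ_pure: "tens_circ (pure a bs) (pure a' bs') = pure_circ a bs a' bs'"
  by (simp add: tens_circ_eq tensor_ext_pure multilinear_pure_circ_left
      multilinear_pure_circ_right)

lemma pbr_length_neq: "length rs \<noteq> length rs' \<Longrightarrow> pbr a rs a' rs' = 0"
  by (cases rs; cases rs') auto

lemma linear_pbr_left: "linear (\<lambda>a. pbr a rs a' rs')"
proof (induction rs arbitrary: rs')
  case Nil
  show ?case
    by (cases rs') (simp_all add: linear_zero linear_compose_lambda[OF linear_br1_left linear_pure])
next
  case (Cons b rs)
  show ?case
  proof (cases rs')
    case (Cons b' rs'')
    then show ?thesis
      using linear_compose_add[OF linear_compose_lambda[OF Cons.IH linear_tensor_right]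
          linear_compose_lambda[OF linear_circ1 linear_pure]]
      by (cases "length rs = length rs''") (simp_all add: linear_zero)
  qed (simp add: linear_zero)
qed

lemma linear_pbr_right: "linear (\<lambda>a'. pbr a rs a' rs')"
proof (induction rs arbitrary: rs')
  case Nil
  show ?case
    by (cases rs') (simp_all add: linear_zero linear_compose_lambda[OF linear_br1 linear_pure])
next
  case (Cons b rs)
  show ?case
  proof (cases rs')
    case (Cons b' rs'')
    then show ?thesis
      using linear_compose_add[OF linear_compose_lambda[OF Cons.IH linear_tensor_right]
          linear_compose_lambda[OF linear_circ1_left linear_pure]]
      by (cases "length rs = length rs''") (simp_all add: linear_zero)
  qed (simp add: linear_zero)
qed


lemma linear_pbr_slot_left: "i < length rs \<Longrightarrow> linear (\<lambda>b. pbr a (rs[i := b]) a' rs')"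
proof (induction rs arbitrary: i rs')
  case Nil
  then show ?case by simp
next
  case (Cons c rs)
  show ?case
  proof (cases rs')
    case (Cons c' rs'')
    show ?thesis
    proof (cases "length rs = length rs''")
      case len: True
      show ?thesis
      proof (cases i)
        case 0
        have "linear (\<lambda>b. tensor_right (pbr a rs a' rs'') [circ2 b c']
              + pure (circ1 a' a) (rev (map2 circ2 rs'' rs) @ [br2 b c']))"
          by (rule linear_compose_add[OF linear_tensor_right_single[OF linear_circ2_left]
                linear_pure_last[OF linear_br2_left]])
        then show ?thesis using 0 Cons len by simp
      next
        case (Suc j)
        with Cons.prems have j: "j < length rs" by simp
        let ?L = "map2 circ2 rs'' rs"
        have "rev (map2 circ2 rs'' (rs[j := b])) @ [br2 c c']
            = (rev ?L @ [br2 c c'])[length ?L - j - 1 := circ2 (rs'' ! j) b]" for b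
          using j len by (simp add: map2_update_right rev_update list_update_append1)
        moreover have "linear (\<lambda>b. tensor_right (pbr a (rs[j := b]) a' rs'') [circ2 c c']
              + pure (circ1 a' a) ((rev ?L @ [br2 c c'])[length ?L - j - 1 := circ2 (rs'' ! j) b]))"
          by (rule linear_compose_add[OF linear_compose_lambda[OF Cons.IH[OF j] linear_tensor_right]
                linear_pure_update[OF _ linear_circ2]])
             (use j len in simp)
        ultimately show ?thesis using Suc Cons len by simp
      qed
    qed (use Cons in \<open>cases i; simp add: linear_zero\<close>)
  qed (cases i; simp add: linear_zero)
qed

lemma linear_pbr_slot_right: "i < length rs' \<Longrightarrow> linear (\<lambda>b. pbr a rs a' (rs'[i := b]))"
proof (induction rs' arbitrary: i rs)
  case Nil
  then show ?case by simp
next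
  case (Cons c' rs'')
  show ?case
  proof (cases rs)
    case (Cons c rs0)
    show ?thesis
    proof (cases "length rs0 = length rs''")
      case len: True
      show ?thesis
      proof (cases i)
        case 0
        have "linear (\<lambda>b. tensor_right (pbr a rs0 a' rs'') [circ2 c b]
              + pure (circ1 a' a) (rev (map2 circ2 rs'' rs0) @ [br2 c b]))"
          by (rule linear_compose_add[OF linear_tensor_right_single[OF linear_circ2]
                linear_pure_last[OF linear_br2]])
        then show ?thesis using 0 Cons len by simp
      next
        case (Suc j)
        with Cons.prems have j: "j < length rs''" by simp
        let ?L = "map2 circ2 rs'' rs0"
        have "rev (map2 circ2 (rs''[j := b]) rs0) @ [br2 c c']
            = (rev ?L @ [br2 c c'])[length ?L - j - 1 := circ2 b (rs0 ! j)]" for b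
          using j len by (simp add: map2_update_left rev_update list_update_append1)
        moreover have "linear (\<lambda>b. tensor_right (pbr a rs0 a' (rs''[j := b])) [circ2 c c']
              + pure (circ1 a' a) ((rev ?L @ [br2 c c'])[length ?L - j - 1 := circ2 b (rs0 ! j)]))"
          by (rule linear_compose_add[OF linear_compose_lambda[OF Cons.IH[OF j] linear_tensor_right]
                linear_pure_update[OF _ linear_circ2_left]])
             (use j len in simp)
        ultimately show ?thesis using Suc Cons len by simp
      qed
    qed (use Cons in \<open>cases i; simp add: linear_zero\<close>)
  qed (cases i; simp add: linear_zero)
qed

lemma multilinear_pbr_left: "multilinear (\<lambda>a bs. pbr a (rev bs) a' (rev bs'))"
  unfolding multilinear_def
proof (intro conjI allI impI)
  fix a :: 'a and bs :: "'b list" and i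
  assume "i < length bs"
  then show "linear (\<lambda>b. pbr a (rev (bs[i := b])) a' (rev bs'))"
    using linear_pbr_slot_left[of "length bs - i - 1" "rev bs" a a' "rev bs'"]
    by (simp add: rev_update)
qed (rule linear_pbr_left)

lemma multilinear_pbr_right: "multilinear (\<lambda>a' bs'. pbr a (rev bs) a' (rev bs'))"
  unfolding multilinear_def
proof (intro conjI allI impI)
  fix a' :: 'a and bs' :: "'b list" and i
  assume "i < length bs'"
  then show "linear (\<lambda>b. pbr a (rev bs) a' (rev (bs'[i := b])))"
    using linear_pbr_slot_right[of "length bs' - i - 1" "rev bs'" a "rev bs" a']
    by (simp add: rev_update)
qed (rule linear_pbr_right)

lemma tens_br_eq:
  "tens_br s t = tensor_ext (\<lambda>a bs. tensor_ext (\<lambda>a' bs'. pbr a (rev bs) a' (rev bs')) t) s"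
  by (simp add: tbr_def tensor_ext2_def)

lemma linear_tens_br_left: "linear (\<lambda>s. tens_br s t)"
  unfolding tens_br_eq
  by (rule linear_tensor_ext[OF multilinear_tensor_ext_param[OF multilinear_pbr_left]])

lemma linear_tens_br_right: "linear (\<lambda>t. tens_br s t)"
  unfolding tens_br_eq
  by (rule linear_tensor_ext_param) (rule linear_tensor_ext[OF multilinear_pbr_right])

lemma tens_br_pure: "tens_br (pure a bs) (pure a' bs') = pbr a (rev bs) a' (rev bs')"
  by (simp add: tens_br_eq tensor_ext_pure multilinear_pbr_left multilinear_pbr_right)

lemma tens_br_tgrade_neq:
  assumes "S \<in> tgrade k" "T \<in> tgrade l" "k \<noteq> l"
  shows "tens_br S T = 0"
  unfolding tens_br_eq
proof (rule tensor_ext_tgrade_eq_0[OF assms(1) multilinear_tensor_ext_param[OF multilinear_pbr_left]])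
  fix a and bs :: "'b list"
  assume "length bs = k"
  then show "tensor_ext (\<lambda>a' bs'. pbr a (rev bs) a' (rev bs')) T = 0"
    using assms by (intro tensor_ext_tgrade_eq_0[OF assms(2) multilinear_pbr_right])
      (simp add: pbr_length_neq)
qed

lemma tens_br_tensor_right_single:
  "tens_br (tensor_right X [b]) (tensor_right X' [b'])
   = tensor_right (tens_br X X') [circ2 b b'] + tensor_right (tens_circ X' X) [br2 b b']"
proof (rule bilinear_eq_on_pure[where
      F = "\<lambda>X X'. tens_br (tensor_right X [b]) (tensor_right X' [b'])" and
      G = "\<lambda>X X'. tensor_right (tens_br X X') [circ2 b b'] + tensor_right (tens_circ X' X) [br2 b b']"])
  fix a cs a' cs'
  show "tens_br (tensor_right (pure a cs) [b]) (tensor_right (pure a' cs') [b'])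
      = tensor_right (tens_br (pure a cs) (pure a' cs')) [circ2 b b']
        + tensor_right (tens_circ (pure a' cs') (pure a cs)) [br2 b b']"
    by (cases "length cs = length cs'")
       (simp_all add: tensor_right_pure tens_br_pure tens_circ_pure pure_circ_def rev_map2_rev
         pbr_length_neq)
qed (intro linear_compose_add linear_compose_lambda[OF _ linear_tensor_right]
      linear_compose_lambda[OF linear_tensor_right]
      linear_tens_br_left linear_tens_br_right linear_tens_circ_left linear_tens_circ_right)+

lemma tens_circ_tensor_right:
  assumes "length ys = length zs"
  shows "tens_circ (tensor_right X ys) (tensor_right Y zs)
       = tensor_right (tens_circ X Y) (map2 circ2 ys zs)"
proof (rule bilinear_eq_on_pure[where
      F = "\<lambda>X Y. tens_circ (tensor_right X ys) (tensor_right Y zs)" and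
      G = "\<lambda>X Y. tensor_right (tens_circ X Y) (map2 circ2 ys zs)"])
  fix a cs a' cs'
  show "tens_circ (tensor_right (pure a cs) ys) (tensor_right (pure a' cs') zs)
      = tensor_right (tens_circ (pure a cs) (pure a' cs')) (map2 circ2 ys zs)"
    using assms by (simp add: tensor_right_pure tens_circ_pure pure_circ_def)
qed (intro linear_compose_lambda[OF _ linear_tensor_right]
      linear_compose_lambda[OF linear_tensor_right]
      linear_tens_circ_left linear_tens_circ_right)+

end

section \<open>Units of generalized Jordan-Lie algebras\<close>

lemma gen_JL_bilin: "gen_JL circ br e \<Longrightarrow> bilin circ \<and> bilin br"
  unfolding gen_JL_def by blast

lemma gen_JL_circ_unit: "gen_JL circ br e \<Longrightarrow> circ e a = a \<and> circ a e = a"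
  unfolding gen_JL_def by blast

lemma gen_JL_br_antisym: "gen_JL circ br e \<Longrightarrow> br a b = - br b a"
  unfolding gen_JL_def by blast

text \<open>The Leibniz rule applied to e \<circ> e = e gives [a, e] = 2 [a, e].\<close>
lemma gen_JL_br_unit_right:
  assumes "gen_JL circ br e"
  shows "br a e = 0"
proof -
  have "br a (circ e e) = circ e (br a e) + circ (br a e) e"
    using assms unfolding gen_JL_def by blast
  then have "br a e = br a e + br a e" using gen_JL_circ_unit[OF assms] by simp
  then show ?thesis by simp
qed

lemma gen_JL_br_unit_left: "gen_JL circ br e \<Longrightarrow> br e a = 0"
  using gen_JL_br_antisym[of circ br e e a] gen_JL_br_unit_right[of circ br e a] by simp

locale gen_JL_pair =
  fixes circ1 br1 :: "'a::real_vector \<Rightarrow> 'a \<Rightarrow> 'a" and e1 :: 'a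
    and circ2 br2 :: "'b::real_vector \<Rightarrow> 'b \<Rightarrow> 'b" and e2 :: 'b
  assumes JL1: "gen_JL circ1 br1 e1" and JL2: "gen_JL circ2 br2 e2"

sublocale gen_JL_pair \<subseteq> bilinear_ops
  using gen_JL_bilin[OF JL1] gen_JL_bilin[OF JL2] by unfold_locales auto

context gen_JL_pair
begin

lemma tens_br_pad_right:
  "tens_br (tensor_right U ys) (tensor_right V (replicate (length ys) e2))
   = tensor_right (tens_br U V) ys"
proof (induction ys rule: rev_induct)
  case Nil
  show ?case by simp
next
  case (snoc y ys)
  have "tens_br (tensor_right U (ys @ [y])) (tensor_right V (replicate (length (ys @ [y])) e2))
      = tens_br (tensor_right (tensor_right U ys) [y])
          (tensor_right (tensor_right V (replicate (length ys) e2)) [e2])"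
    by (simp only: tensor_right_append length_append_singleton replicate_Suc replicate_append_same[symmetric])
  also have "\<dots> = tensor_right (tensor_right (tens_br U V) ys) [y]"
    by (simp add: tens_br_tensor_right_single snoc gen_JL_circ_unit[OF JL2]
        gen_JL_br_unit_right[OF JL2])
  finally show ?case by (simp add: tensor_right_append)
qed

lemma tens_br_pad_left:
  "tens_br (tensor_right V (replicate (length ys) e2)) (tensor_right U ys)
   = tensor_right (tens_br V U) ys"
proof (induction ys rule: rev_induct)
  case Nil
  show ?case by simp
next
  case (snoc y ys)
  have "tens_br (tensor_right V (replicate (length (ys @ [y])) e2)) (tensor_right U (ys @ [y]))
      = tens_br (tensor_right (tensor_right V (replicate (length ys) e2)) [e2])
          (tensor_right (tensor_right U ys) [y])"
    by (simp only: tensor_right_append length_append_singleton replicate_Suc replicate_append_same[symmetric])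
  also have "\<dots> = tensor_right (tensor_right (tens_br V U) ys) [y]"
    by (simp add: tens_br_tensor_right_single snoc gen_JL_circ_unit[OF JL2]
        gen_JL_br_unit_left[OF JL2])
  finally show ?case by (simp add: tensor_right_append)
qed

lemma tens_br_phi_id_pad_right:
  assumes F: "linear F" and Y: "\<And>x. tens_br (F x) Y = 0" and T: "T \<in> tgrade k"
  shows "tens_br (phi_id F T) (tensor_right Y (replicate k e2)) = 0"
proof (rule linear_tgrade_eq_0[OF T])
  show "linear (\<lambda>T. tens_br (phi_id F T) (tensor_right Y (replicate k e2)))"
    by (rule linear_compose_lambda[OF linear_phi_id[OF F] linear_tens_br_left])
  fix x and ys :: "'b list"
  assume "length ys = k"
  then show "tens_br (phi_id F (pure x ys)) (tensor_right Y (replicate k e2)) = 0"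
    using tens_br_pad_right[of "F x" ys Y] by (simp add: phi_id_pure[OF F] Y)
qed

lemma tens_br_phi_id_pad_left:
  assumes F: "linear F" and Y: "\<And>x. tens_br Y (F x) = 0" and T: "T \<in> tgrade k"
  shows "tens_br (tensor_right Y (replicate k e2)) (phi_id F T) = 0"
proof (rule linear_tgrade_eq_0[OF T])
  show "linear (\<lambda>T. tens_br (tensor_right Y (replicate k e2)) (phi_id F T))"
    by (rule linear_compose_lambda[OF linear_phi_id[OF F] linear_tens_br_right])
  fix x and ys :: "'b list"
  assume "length ys = k"
  then show "tens_br (tensor_right Y (replicate k e2)) (phi_id F (pure x ys)) = 0"
    using tens_br_pad_left[of Y ys "F x"] by (simp add: phi_id_pure[OF F] Y)
qed

end

section \<open>Iterated coproducts of a bracket homomorphism\<close>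

lemma Cas_eq_pad:
  assumes "i \<le> j" "j \<le> N"
  shows "Cas \<phi> e2 C N i
       = tensor_right (tensor_right (phi_sup \<phi> i C) (replicate (j - i) e2)) (replicate (N - j) e2)"
proof -
  have "N - i = (j - i) + (N - j)" using assms by simp
  then show ?thesis by (simp add: Cas_def tensor_right_append replicate_add)
qed

locale JL_hom = gen_JL_pair +
  fixes \<phi> :: "'a \<Rightarrow> ('a,'b) tensor"
  assumes linear_phi: "linear \<phi>" and phi_in_tgrade: "\<And>a. \<phi> a \<in> tgrade 1"
    and phi_br: "\<And>a b. tbr circ1 br1 circ2 br2 (\<phi> a) (\<phi> b) = \<phi> (br1 a b)"
    and phi_circ: "\<And>a b. \<phi> (circ1 a b) = tcirc circ1 circ2 (\<phi> a) (\<phi> b)"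
begin

lemma tens_br_tensor_right_phi:
  "length bs = length bs' \<Longrightarrow>
   tens_br (tensor_right (\<phi> a) bs) (tensor_right (\<phi> a') bs') = phi_id \<phi> (pbr a (rev bs) a' (rev bs'))"
proof (induction bs arbitrary: bs' rule: rev_induct)
  case Nil
  then show ?case by (simp add: phi_id_pure[OF linear_phi] phi_br)
next
  case (snoc b cs)
  then obtain cs' b' where bs': "bs' = cs' @ [b']" and len: "length cs' = length cs"
    by (cases bs' rule: rev_cases) auto
  have "tens_br (tensor_right (\<phi> a) (cs @ [b])) (tensor_right (\<phi> a') bs')
      = tens_br (tensor_right (tensor_right (\<phi> a) cs) [b]) (tensor_right (tensor_right (\<phi> a') cs') [b'])"
    by (simp add: bs' tensor_right_append)
  also have "\<dots> = tensor_right (phi_id \<phi> (pbr a (rev cs) a' (rev cs'))) [circ2 b b']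
      + tensor_right (tensor_right (\<phi> (circ1 a' a)) (map2 circ2 cs' cs)) [br2 b b']"
    using snoc.IH len by (simp add: tens_br_tensor_right_single tens_circ_tensor_right phi_circ)
  also have "\<dots> = phi_id \<phi> (pbr a (rev (cs @ [b])) a' (rev bs'))"
    using len by (simp add: bs' linear_add[OF linear_phi_id[OF linear_phi]]
        phi_id_tensor_right[OF linear_phi] phi_id_pure[OF linear_phi] rev_map2_rev
        tensor_right_append)
  finally show ?case .
qed

lemma tens_br_phi_id: "tens_br (phi_id \<phi> S) (phi_id \<phi> T) = phi_id \<phi> (tens_br S T)"
proof (rule bilinear_eq_on_pure[where F = "\<lambda>S T. tens_br (phi_id \<phi> S) (phi_id \<phi> T)"
      and G = "\<lambda>S T. phi_id \<phi> (tens_br S T)"])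
  fix a bs a' bs'
  show "tens_br (phi_id \<phi> (pure a bs)) (phi_id \<phi> (pure a' bs'))
      = phi_id \<phi> (tens_br (pure a bs) (pure a' bs'))"
  proof (cases "length bs = length bs'")
    case True
    then show ?thesis
      by (simp add: phi_id_pure[OF linear_phi] tens_br_pure tens_br_tensor_right_phi)
  next
    case False
    have "tensor_right (\<phi> a) bs \<in> tgrade (1 + length bs)"
      and "tensor_right (\<phi> a') bs' \<in> tgrade (1 + length bs')"
      by (rule tensor_right_in_tgrade[OF phi_in_tgrade])+
    then show ?thesis
      using False tens_br_tgrade_neq
      by (simp add: phi_id_pure[OF linear_phi] tens_br_pure pbr_length_neq
          linear_0[OF linear_phi_id[OF linear_phi]])
  qed
qed (intro linear_compose_lambda[OF linear_phi_id[OF linear_phi]]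
      linear_compose_lambda[OF _ linear_phi_id[OF linear_phi]]
      linear_tens_br_left linear_tens_br_right)+

lemma phi_aux_tens_br: "tens_br (phi_aux \<phi> k a) (phi_aux \<phi> k b) = phi_aux \<phi> k (br1 a b)"
  by (induction k arbitrary: a b) (simp_all add: phi_br tens_br_phi_id)

lemma tens_br_phi_aux_Casimir_right:
  assumes C: "\<And>a. br1 C a = 0"
  shows "tens_br (phi_aux \<phi> (j + m) a) (tensor_right (phi_aux \<phi> j C) (replicate m e2)) = 0"
proof (cases m)
  case 0
  have "br1 a C = 0" using gen_JL_br_antisym[OF JL1, of a C] C by simp
  with 0 show ?thesis by (simp add: phi_aux_tens_br linear_0[OF linear_phi_aux[OF linear_phi]])
next
  case (Suc k)
  have "phi_aux \<phi> (j + Suc k) a = phi_id (phi_aux \<phi> j) (phi_aux \<phi> k a)"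
    using phi_aux_add[OF linear_phi, of j k] by simp
  moreover have "tens_br (phi_aux \<phi> j x) (phi_aux \<phi> j C) = 0" for x
    using gen_JL_br_antisym[OF JL1, of x C] C
    by (simp add: phi_aux_tens_br linear_0[OF linear_phi_aux[OF linear_phi]])
  ultimately show ?thesis
    unfolding Suc by (simp only: tens_br_phi_id_pad_right linear_phi_aux[OF linear_phi]
        phi_aux_in_tgrade[OF linear_phi phi_in_tgrade])
qed

lemma tens_br_phi_aux_Casimir_left:
  assumes C: "\<And>a. br1 C a = 0"
  shows "tens_br (tensor_right (phi_aux \<phi> j C) (replicate m e2)) (phi_aux \<phi> (j + m) a) = 0"
proof (cases m)
  case 0
  with C show ?thesis by (simp add: phi_aux_tens_br linear_0[OF linear_phi_aux[OF linear_phi]])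
next
  case (Suc k)
  have "phi_aux \<phi> (j + Suc k) a = phi_id (phi_aux \<phi> j) (phi_aux \<phi> k a)"
    using phi_aux_add[OF linear_phi, of j k] by simp
  moreover have "tens_br (phi_aux \<phi> j C) (phi_aux \<phi> j x) = 0" for x
    using C by (simp add: phi_aux_tens_br linear_0[OF linear_phi_aux[OF linear_phi]])
  ultimately show ?thesis
    unfolding Suc by (simp only: tens_br_phi_id_pad_left linear_phi_aux[OF linear_phi]
        phi_aux_in_tgrade[OF linear_phi phi_in_tgrade])
qed

lemma tens_br_phi_sup_Cas:
  assumes "\<And>a. br1 C a = 0" "2 \<le> i" "i \<le> N"
  shows "tens_br (phi_sup \<phi> N a) (Cas \<phi> e2 C N i) = 0"
proof -
  have "N - 2 = (i - 2) + (N - i)" using assms by simp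
  then show ?thesis
    using tens_br_phi_aux_Casimir_right[OF assms(1), of "i - 2" "N - i" a]
    by (simp add: phi_sup_def Cas_def)
qed

lemma tens_br_Cas_Cas:
  assumes C: "\<And>a. br1 C a = 0" and "2 \<le> i" "i \<le> j" "j \<le> N"
  shows "tens_br (Cas \<phi> e2 C N i) (Cas \<phi> e2 C N j) = 0 \<and> tens_br (Cas \<phi> e2 C N j) (Cas \<phi> e2 C N i) = 0"
proof -
  let ?ys = "replicate (N - j) e2" and ?k = "j - i"
  let ?V = "tensor_right (phi_aux \<phi> (i - 2) C) (replicate ?k e2)"
  have i: "Cas \<phi> e2 C N i = tensor_right ?V (replicate (length ?ys) e2)"
    using Cas_eq_pad[OF assms(3,4)] by (simp add: phi_sup_def)
  have j: "Cas \<phi> e2 C N j = tensor_right (phi_aux \<phi> ((i - 2) + ?k) C) ?ys"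
    using assms by (simp add: Cas_def phi_sup_def)
  show ?thesis
    unfolding i j tens_br_pad_left tens_br_pad_right
    by (simp add: tens_br_phi_aux_Casimir_left[OF C] tens_br_phi_aux_Casimir_right[OF C])
qed

end

theorem theorem1:
  fixes circ1 br1 :: "'a::real_vector \<Rightarrow> 'a \<Rightarrow> 'a" and e1 :: 'a
    and circ2 br2 :: "'b::real_vector \<Rightarrow> 'b \<Rightarrow> 'b" and e2 :: 'b
    and C :: 'a and \<phi> :: "'a \<Rightarrow> ('a, 'b) tensor" and N :: nat
  assumes alg: "(CJL circ1 br1 e1 \<and> CJL circ2 br2 e2) \<or> (QJL circ1 br1 e1 \<and> QJL circ2 br2 e2)"
    and casimir: "\<forall>a. br1 C a = 0"
    and lin: "linear \<phi>"
    and range: "\<forall>a. \<phi> a \<in> tgrade 1"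
    and hom_br: "\<forall>a b. tbr circ1 br1 circ2 br2 (\<phi> a) (\<phi> b) = \<phi> (br1 a b)"
    and hom_circ: "\<forall>a b. \<phi> (circ1 a b) = tcirc circ1 circ2 (\<phi> a) (\<phi> b)"
    and N: "N \<ge> 2"
  shows "(\<forall>i j. 2 \<le> i \<and> i \<le> N \<and> 2 \<le> j \<and> j \<le> N \<longrightarrow>
            tbr circ1 br1 circ2 br2 (Cas \<phi> e2 C N i) (Cas \<phi> e2 C N j) = 0)
       \<and> (\<forall>a i. 2 \<le> i \<and> i \<le> N \<longrightarrow>
            tbr circ1 br1 circ2 br2 (phi_sup \<phi> N a) (Cas \<phi> e2 C N i) = 0)"
proof -
  have JL: "gen_JL circ1 br1 e1" "gen_JL circ2 br2 e2"
    using alg unfolding CJL_def QJL_def by blast+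
  interpret JL_hom circ1 br1 e1 circ2 br2 e2 \<phi>
    by (rule JL_hom.intro[OF gen_JL_pair.intro[OF JL] JL_hom_axioms.intro[OF lin]])
      (use range hom_br hom_circ in blast)+
  have C: "\<And>a. br1 C a = 0" using casimir by blast
  show ?thesis
    using tens_br_Cas_Cas[OF C] tens_br_phi_sup_Cas[OF C] by (metis nat_le_linear)
qed

end
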